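(* Let $(X,\mathcal{O}(X))$ be a measurable space, $\mathcal{A}$ a unital $C^*$-algebra and $\mathcal{H}$ a Hilbert space, and let $\mathcal{I}:\mathcal{O}(X)\to CP(\mathcal{A},\mathcal{B}(\mathcal{H}))$ be a UCP instrument. Then the following are equivalent: (i) $\mathcal{I}$ is a spectral instrument; (ii) $\mathcal{I}(A,a)=\phi_\mathcal{I}(a)\mu_\mathcal{I}(A)=\mu_\mathcal{I}(A)\phi_\mathcal{I}(a)$ for all $a\in\mathcal{A}$, $A\in\mathcal{O}(X)$, where $\phi_\mathcal{I}:\mathcal{A}\to\mathcal{B}(\mathcal{H})$ is a unital $*$-homomorphism and $\mu_\mathcal{I}:\mathcal{O}(X)\to\mathcal{B}(\mathcal{H})$ is a spectral measure.
   Context: A CP instrument is a map $\mathcal{I}$ from $\mathcal{O}(X)$ to the completely positive maps $\mathcal{A}\to\mathcal{B}(\mathcal{H})$ such that for all $a\in\mathcal{A}$, $h,k\in\mathcal{H}$, $A\mapsto\langle h,\mathcal{I}(A)(a)k\rangle$ is a countably additive complex measure; write $\mathcal{I}(A,a)=\mathcal{I}(A)(a)$. It is UCP (normalized) if $\mathcal{I}(X)(1_\mathcal{A})=I_\mathcal{H}$. It is spectral if it is normalized and $\mathcal{I}(A)$ is a $*$-homomorphism for every $A\in\mathcal{O}(X)$. Marginals: $\mu_\mathcal{I}(A)=\mathcal{I}(A,1_\mathcal{A})$ and $\phi_\mathcal{I}=\mathcal{I}(X,\cdot)$. A spectral measure is a projection-valued measure. *)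

theory Defs
  imports "HOL-Analysis.Analysis"
begin

class complex_vector = real_vector +
  fixes scaleC :: "complex \<Rightarrow> 'a \<Rightarrow> 'a"
  assumes scaleC_add_right: "scaleC c (x + y) = scaleC c x + scaleC c y"
    and scaleC_add_left: "scaleC (c + d) x = scaleC c x + scaleC d x"
    and scaleC_scaleC: "scaleC c (scaleC d x) = scaleC (c * d) x"
    and scaleC_one: "scaleC 1 x = x"
    and scaleR_scaleC: "scaleR r x = scaleC (complex_of_real r) x"

text \<open>Complex inner product space; the inner product is conjugate-linear in the
first and linear in the second argument; the norm is the one induced by it.\<close>
class complex_inner = complex_vector + real_normed_vector +
  fixes cinner :: "'a \<Rightarrow> 'a \<Rightarrow> complex"
  assumes cinner_add_right: "cinner x (y + z) = cinner x y + cinner x z"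
    and cinner_scaleC_right: "cinner x (scaleC c y) = c * cinner x y"
    and cinner_commute: "cinner x y = cnj (cinner y x)"
    and cinner_norm: "cinner x x = complex_of_real ((norm x)\<^sup>2)"

class chilbert_space = complex_inner + complete_space

class cstar_algebra = complex_vector + real_normed_algebra_1 + banach +
  fixes cstar :: "'a \<Rightarrow> 'a"
  assumes scaleC_mult_left: "scaleC c (a * b) = scaleC c a * b"
    and scaleC_mult_right: "scaleC c (a * b) = a * scaleC c b"
    and cstar_cstar: "cstar (cstar a) = a"
    and cstar_add: "cstar (a + b) = cstar a + cstar b"
    and cstar_scaleC: "cstar (scaleC c a) = scaleC (cnj c) (cstar a)"
    and cstar_mult: "cstar (a * b) = cstar b * cstar a"
    and cstar_identity: "norm (cstar a * a) = (norm a)\<^sup>2"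

definition is_clinear :: "('a::complex_vector \<Rightarrow> 'b::complex_vector) \<Rightarrow> bool" where
  "is_clinear f \<longleftrightarrow> (\<forall>x y. f (x + y) = f x + f y) \<and> (\<forall>c x. f (scaleC c x) = scaleC c (f x))"

definition bounded_op :: "('h::complex_inner \<Rightarrow> 'h) \<Rightarrow> bool" where
  "bounded_op T \<longleftrightarrow> is_clinear T \<and> (\<exists>K. \<forall>x. norm (T x) \<le> K * norm x)"

definition selfadjoint_op :: "('h::complex_inner \<Rightarrow> 'h) \<Rightarrow> bool" where
  "selfadjoint_op T \<longleftrightarrow> (\<forall>x y. cinner x (T y) = cinner (T x) y)"

definition projection_op :: "('h::complex_inner \<Rightarrow> 'h) \<Rightarrow> bool" where
  "projection_op P \<longleftrightarrow> bounded_op P \<and> selfadjoint_op P \<and> P \<circ> P = P"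

definition linear_map_to_ops :: "('a::cstar_algebra \<Rightarrow> 'h::complex_inner \<Rightarrow> 'h) \<Rightarrow> bool" where
  "linear_map_to_ops \<phi> \<longleftrightarrow> (\<forall>a. bounded_op (\<phi> a))
     \<and> (\<forall>a b. \<phi> (a + b) = (\<lambda>x. \<phi> a x + \<phi> b x))
     \<and> (\<forall>c a. \<phi> (scaleC c a) = (\<lambda>x. scaleC c (\<phi> a x)))"

text \<open>Complete positivity: for every n the amplification
  \<phi>_n : M_n(A) \<rightarrow> M_n(B(H)) = B(H^n) sends positive elements of M_n(A),
  i.e. those of the form B* B with B \<in> M_n(A), to positive operators on H^n.\<close>
definition completely_positive :: "('a::cstar_algebra \<Rightarrow> 'h::complex_inner \<Rightarrow> 'h) \<Rightarrow> bool" where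
  "completely_positive \<phi> \<longleftrightarrow> linear_map_to_ops \<phi> \<and>
     (\<forall>(n::nat) (B::nat \<Rightarrow> nat \<Rightarrow> 'a) (\<xi>::nat \<Rightarrow> 'h).
        let s = (\<Sum>i<n. \<Sum>j<n. cinner (\<xi> i) (\<phi> (\<Sum>k<n. cstar (B k i) * B k j) (\<xi> j)))
        in Im s = 0 \<and> Re s \<ge> 0)"

definition star_hom :: "('a::cstar_algebra \<Rightarrow> 'h::complex_inner \<Rightarrow> 'h) \<Rightarrow> bool" where
  "star_hom \<phi> \<longleftrightarrow> linear_map_to_ops \<phi>
     \<and> (\<forall>a b. \<phi> (a * b) = \<phi> a \<circ> \<phi> b)
     \<and> (\<forall>a x y. cinner x (\<phi> (cstar a) y) = cinner (\<phi> a x) y)"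

definition unital_star_hom :: "('a::cstar_algebra \<Rightarrow> 'h::complex_inner \<Rightarrow> 'h) \<Rightarrow> bool" where
  "unital_star_hom \<phi> \<longleftrightarrow> star_hom \<phi> \<and> \<phi> 1 = id"

definition cp_instrument :: "'x measure \<Rightarrow> ('x set \<Rightarrow> 'a::cstar_algebra \<Rightarrow> 'h::complex_inner \<Rightarrow> 'h) \<Rightarrow> bool" where
  "cp_instrument M I \<longleftrightarrow> (\<forall>A\<in>sets M. completely_positive (I A)) \<and>
     (\<forall>a h k (F::nat \<Rightarrow> 'x set). range F \<subseteq> sets M \<longrightarrow> disjoint_family F \<longrightarrow>
        (\<lambda>n. cinner h (I (F n) a k)) sums cinner h (I (\<Union>n. F n) a k))"

definition ucp_instrument :: "'x measure \<Rightarrow> ('x set \<Rightarrow> 'a::cstar_algebra \<Rightarrow> 'h::complex_inner \<Rightarrow> 'h) \<Rightarrow> bool" where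
  "ucp_instrument M I \<longleftrightarrow> cp_instrument M I \<and> I (space M) 1 = id"

definition spectral_instrument :: "'x measure \<Rightarrow> ('x set \<Rightarrow> 'a::cstar_algebra \<Rightarrow> 'h::complex_inner \<Rightarrow> 'h) \<Rightarrow> bool" where
  "spectral_instrument M I \<longleftrightarrow> ucp_instrument M I \<and> (\<forall>A\<in>sets M. star_hom (I A))"

definition mu_I :: "('x set \<Rightarrow> 'a::cstar_algebra \<Rightarrow> 'h \<Rightarrow> 'h) \<Rightarrow> 'x set \<Rightarrow> 'h \<Rightarrow> 'h" where
  "mu_I I A = I A 1"

definition phi_I :: "'x measure \<Rightarrow> ('x set \<Rightarrow> 'a \<Rightarrow> 'h \<Rightarrow> 'h) \<Rightarrow> 'a \<Rightarrow> 'h \<Rightarrow> 'h" where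
  "phi_I M I = I (space M)"

definition spectral_measure :: "'x measure \<Rightarrow> ('x set \<Rightarrow> 'h::complex_inner \<Rightarrow> 'h) \<Rightarrow> bool" where
  "spectral_measure M P \<longleftrightarrow> (\<forall>A\<in>sets M. projection_op (P A)) \<and> P (space M) = id \<and>
     (\<forall>h k (F::nat \<Rightarrow> 'x set). range F \<subseteq> sets M \<longrightarrow> disjoint_family F \<longrightarrow>
        (\<lambda>n. cinner h (P (F n) k)) sums cinner h (P (\<Union>n. F n) k))"

end

theory Submission
  imports Defs
begin

text \<open>If every \<open>\<I>(A)\<close> is a *-homomorphism, then \<open>\<I>(A,1)\<close> and \<open>\<I>(X\<setminus>A,1)\<close> are
  projections summing to the identity, hence mutually orthogonal; splitting
  \<open>\<phi>(a) = \<I>(A,a) + \<I>(X\<setminus>A,a)\<close> and applying it to the range of \<open>\<I>(A,1)\<close> (or projecting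
  it onto that range) kills the second summand, which gives
  \<open>\<I>(A,a) = \<phi>(a) \<mu>(A) = \<mu>(A) \<phi>(a)\<close>. Conversely, compressing a *-homomorphism by a
  projection that commutes with its range yields again a *-homomorphism.\<close>

lemma cinner_zero_right: "cinner x (0::'a::complex_inner) = 0"
proof -
  have "cinner x (0::'a) = cinner x 0 + cinner x 0"
    by (metis add.right_neutral cinner_add_right)
  then show ?thesis by simp
qed

lemma cinner_diff_right: "cinner x (y - z::'a::complex_inner) = cinner x y - cinner x z"
proof -
  have "cinner x y = cinner x (y - z) + cinner x z"
    by (metis cinner_add_right diff_add_cancel)
  then show ?thesis by simp
qed

lemma cinner_right_eqI:
  assumes "\<And>h. cinner h v = cinner h (w::'a::complex_inner)"
  shows "v = w"
proof -
  have "cinner (v - w) (v - w) = 0"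
    using assms by (simp add: cinner_diff_right)
  then have "complex_of_real ((norm (v - w))\<^sup>2) = 0"
    by (simp add: cinner_norm)
  then show ?thesis by simp
qed

lemma cstar_one: "cstar (1::'a::cstar_algebra) = 1"
  by (metis cstar_cstar cstar_mult mult.left_neutral mult.right_neutral)

lemma bounded_op_add: "bounded_op T \<Longrightarrow> T (x + y) = T x + T y"
  by (simp add: bounded_op_def is_clinear_def)

lemma bounded_op_zero: "bounded_op T \<Longrightarrow> T 0 = 0"
  by (metis add.right_neutral add_left_cancel bounded_op_add)

lemma idempotent_complement_annihilates:
  fixes P Q :: "'a::ab_group_add \<Rightarrow> 'a"
  assumes add: "\<And>x y. P (x + y) = P x + P y"
    and idem: "\<And>x. P (P x) = P x"
    and sum: "\<And>x. P x + Q x = x"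
  shows "P (Q x) = 0"
proof -
  have "P (P x) + P (Q x) = P x"
    using arg_cong[OF sum[of x], of P] by (simp add: add)
  then show ?thesis by (simp add: idem)
qed

lemma star_hom_bounded: "star_hom \<psi> \<Longrightarrow> bounded_op (\<psi> a)"
  by (simp add: star_hom_def linear_map_to_ops_def)

lemma star_hom_mult: "star_hom \<psi> \<Longrightarrow> \<psi> (a * b) x = \<psi> a (\<psi> b x)"
  by (simp add: star_hom_def)

lemma star_hom_adjoint: "star_hom \<psi> \<Longrightarrow> cinner x (\<psi> (cstar a) y) = cinner (\<psi> a x) y"
  by (simp add: star_hom_def)

lemma star_hom_one_right: "star_hom \<psi> \<Longrightarrow> \<psi> a (\<psi> 1 x) = \<psi> a x"
  by (metis mult.right_neutral star_hom_mult)

lemma star_hom_one_left: "star_hom \<psi> \<Longrightarrow> \<psi> 1 (\<psi> a x) = \<psi> a x"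
  by (metis mult.left_neutral star_hom_mult)

lemma star_hom_one_projection:
  assumes "star_hom \<psi>"
  shows "projection_op (\<psi> 1)"
proof -
  have "selfadjoint_op (\<psi> 1)"
    using star_hom_adjoint[OF assms, of _ 1] by (simp add: selfadjoint_op_def cstar_one)
  moreover have "\<psi> 1 \<circ> \<psi> 1 = \<psi> 1"
    using star_hom_one_right[OF assms, of 1] by (simp add: fun_eq_iff)
  ultimately show ?thesis
    using star_hom_bounded[OF assms] by (simp add: projection_op_def)
qed

lemma star_hom_sum_factorization:
  assumes \<psi>: "star_hom \<psi>" and \<kappa>: "star_hom \<kappa>"
    and split: "\<And>a x. \<phi> a x = \<psi> a x + \<kappa> a x"
    and unital: "\<phi> 1 = id"
  shows "\<psi> a = \<phi> a \<circ> \<psi> 1" and "\<psi> a = \<psi> 1 \<circ> \<phi> a"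
proof -
  have complement: "\<psi> 1 x + \<kappa> 1 x = x" for x
    using split[of 1 x] unital by simp
  have \<psi>\<kappa>: "\<psi> 1 (\<kappa> 1 x) = 0" for x
    by (rule idempotent_complement_annihilates)
      (use \<psi> complement in \<open>simp_all add: bounded_op_add star_hom_bounded star_hom_one_right\<close>)
  have \<kappa>\<psi>: "\<kappa> 1 (\<psi> 1 x) = 0" for x
    by (rule idempotent_complement_annihilates)
      (use \<kappa> complement in \<open>simp_all add: add.commute bounded_op_add star_hom_bounded star_hom_one_right\<close>)
  have "\<phi> a (\<psi> 1 x) = \<psi> a x" for x
  proof -
    have "\<kappa> a (\<psi> 1 x) = \<kappa> a (\<kappa> 1 (\<psi> 1 x))"
      using star_hom_one_right[OF \<kappa>] by simp
    also have "\<dots> = 0"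
      by (simp add: \<kappa>\<psi> \<kappa> bounded_op_zero star_hom_bounded)
    finally show ?thesis
      using split[of a "\<psi> 1 x"] star_hom_one_right[OF \<psi>] by simp
  qed
  then show "\<psi> a = \<phi> a \<circ> \<psi> 1" by (simp add: fun_eq_iff)
  have "\<psi> 1 (\<phi> a x) = \<psi> a x" for x
  proof -
    have "\<psi> 1 (\<kappa> a x) = \<psi> 1 (\<kappa> 1 (\<kappa> a x))"
      using star_hom_one_left[OF \<kappa>] by simp
    also have "\<dots> = 0"
      by (rule \<psi>\<kappa>)
    finally show ?thesis
      using split[of a x] star_hom_one_left[OF \<psi>]
      by (simp add: \<psi> bounded_op_add star_hom_bounded)
  qed
  then show "\<psi> a = \<psi> 1 \<circ> \<phi> a" by (simp add: fun_eq_iff)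
qed

lemma star_hom_compression:
  assumes \<phi>: "star_hom \<phi>" and P: "projection_op P" and \<psi>: "linear_map_to_ops \<psi>"
    and right: "\<And>a. \<psi> a = \<phi> a \<circ> P" and left: "\<And>a. \<psi> a = P \<circ> \<phi> a"
  shows "star_hom \<psi>"
proof -
  have idem: "P (P x) = P x" for x
    using P by (simp add: projection_op_def fun_eq_iff)
  have selfadjoint: "cinner x (P y) = cinner (P x) y" for x y
    using P by (simp add: projection_op_def selfadjoint_op_def)
  have "\<psi> (a * b) x = \<psi> a (\<psi> b x)" for a b x
  proof -
    have "\<psi> (a * b) x = \<phi> a (\<phi> b (P (P x)))"
      by (simp add: right idem star_hom_mult[OF \<phi>])
    also have "\<dots> = \<phi> a (P (\<phi> b (P x)))"
      using left[of b] right[of b] by (simp add: fun_eq_iff)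
    also have "\<dots> = \<psi> a (\<psi> b x)"
      by (simp add: right)
    finally show ?thesis .
  qed
  moreover have "cinner x (\<psi> (cstar a) y) = cinner (\<psi> a x) y" for a x y
  proof -
    have "cinner x (\<psi> (cstar a) y) = cinner (P x) (\<phi> (cstar a) y)"
      by (simp add: left selfadjoint)
    also have "\<dots> = cinner (\<psi> a x) y"
      by (simp add: right star_hom_adjoint[OF \<phi>])
    finally show ?thesis .
  qed
  ultimately show ?thesis
    using \<psi> by (simp add: star_hom_def fun_eq_iff)
qed

lemma cp_instrument_countably_additive:
  assumes "cp_instrument M I" "range F \<subseteq> sets M" "disjoint_family F"
  shows "(\<lambda>n. cinner h (I (F n) a k)) sums cinner h (I (\<Union>n. F n) a k)"
  using assms by (simp add: cp_instrument_def)

lemma cp_instrument_linear: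
  "cp_instrument M I \<Longrightarrow> A \<in> sets M \<Longrightarrow> linear_map_to_ops (I A)"
  by (simp add: cp_instrument_def completely_positive_def)

lemma cp_instrument_empty:
  assumes I: "cp_instrument M I"
  shows "I {} a k = 0"
proof (rule cinner_right_eqI)
  fix h
  have "(\<lambda>n. cinner h (I {} a k)) sums cinner h (I {} a k)"
    using cp_instrument_countably_additive[OF I, of "\<lambda>_. {}"]
    by (simp add: disjoint_family_on_def)
  then have "(\<lambda>n. cinner h (I {} a k)) \<longlonglongrightarrow> 0"
    using summable_LIMSEQ_zero sums_summable by blast
  then show "cinner h (I {} a k) = cinner h 0"
    by (simp add: LIMSEQ_const_iff cinner_zero_right)
qed

lemma cp_instrument_Un:
  assumes I: "cp_instrument M I" and "A \<in> sets M" "B \<in> sets M" "A \<inter> B = {}"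
  shows "I (A \<union> B) a k = I A a k + I B a k"
proof (rule cinner_right_eqI)
  fix h
  have "range (binaryset A B) \<subseteq> sets M" "disjoint_family (binaryset A B)"
    using assms(2-4) by (auto simp: disjoint_family_on_def binaryset_def)
  then have "(\<lambda>n. cinner h (I (binaryset A B n) a k)) sums cinner h (I (A \<union> B) a k)"
    using cp_instrument_countably_additive[OF I] by (metis UN_binaryset_eq)
  moreover have "(\<lambda>n. cinner h (I (binaryset A B n) a k)) sums (cinner h (I A a k) + cinner h (I B a k))"
    using binaryset_sums[where f = "\<lambda>S. cinner h (I S a k)"]
    by (simp add: cp_instrument_empty[OF I] cinner_zero_right)
  ultimately show "cinner h (I (A \<union> B) a k) = cinner h (I A a k + I B a k)"
    by (simp add: sums_unique2 cinner_add_right)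
qed

lemma cp_instrument_space_split:
  assumes "cp_instrument M I" "A \<in> sets M"
  shows "I (space M) a x = I A a x + I (space M - A) a x"
proof -
  have "A \<union> (space M - A) = space M"
    using sets.sets_into_space[OF assms(2)] by blast
  then show ?thesis
    using cp_instrument_Un[OF assms(1,2), of "space M - A"] assms(2) by auto
qed

lemma spectral_instrument_factorization:
  assumes I: "spectral_instrument M I" and A: "A \<in> sets M"
  shows "I A a = phi_I M I a \<circ> mu_I I A \<and> I A a = mu_I I A \<circ> phi_I M I a"
proof -
  have cp: "cp_instrument M I" and unital: "I (space M) 1 = id"
    and hom: "\<And>B. B \<in> sets M \<Longrightarrow> star_hom (I B)"
    using I by (auto simp: spectral_instrument_def ucp_instrument_def)
  have "star_hom (I A)" "star_hom (I (space M - A))"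
    using A by (auto intro: hom)
  from star_hom_sum_factorization[OF this cp_instrument_space_split[OF cp A] unital]
  show ?thesis
    unfolding phi_I_def mu_I_def by blast
qed

lemma spectral_instrument_marginal_spectral_measure:
  assumes "spectral_instrument M I"
  shows "spectral_measure M (mu_I I)"
  using assms cp_instrument_countably_additive[of M I]
  by (auto simp: spectral_measure_def mu_I_def spectral_instrument_def ucp_instrument_def
      intro: star_hom_one_projection)

theorem theorem2p10:
  fixes M :: "'x measure"
    and I :: "'x set \<Rightarrow> 'a::cstar_algebra \<Rightarrow> 'h::chilbert_space \<Rightarrow> 'h"
  assumes "ucp_instrument M I"
  shows "spectral_instrument M I \<longleftrightarrow>
           (unital_star_hom (phi_I M I) \<and> spectral_measure M (mu_I I) \<and>
            (\<forall>a. \<forall>A\<in>sets M. I A a = phi_I M I a \<circ> mu_I I A \<and> I A a = mu_I I A \<circ> phi_I M I a))"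
proof
  assume I: "spectral_instrument M I"
  have "unital_star_hom (phi_I M I)"
    using I by (simp add: spectral_instrument_def ucp_instrument_def unital_star_hom_def phi_I_def)
  with I show "unital_star_hom (phi_I M I) \<and> spectral_measure M (mu_I I) \<and>
      (\<forall>a. \<forall>A\<in>sets M. I A a = phi_I M I a \<circ> mu_I I A \<and> I A a = mu_I I A \<circ> phi_I M I a)"
    using spectral_instrument_marginal_spectral_measure spectral_instrument_factorization
    by blast
next
  assume H: "unital_star_hom (phi_I M I) \<and> spectral_measure M (mu_I I) \<and>
      (\<forall>a. \<forall>A\<in>sets M. I A a = phi_I M I a \<circ> mu_I I A \<and> I A a = mu_I I A \<circ> phi_I M I a)"
  have "star_hom (I A)" if A: "A \<in> sets M" for A
  proof (rule star_hom_compression)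
    show "star_hom (phi_I M I)" using H by (simp add: unital_star_hom_def)
    show "projection_op (mu_I I A)" using H A by (simp add: spectral_measure_def)
    show "linear_map_to_ops (I A)"
      using assms A cp_instrument_linear by (auto simp: ucp_instrument_def)
  qed (use H A in blast)+
  then show "spectral_instrument M I"
    using assms by (simp add: spectral_instrument_def)
qed

end
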